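(* Consider the weighted-median opinion dynamics on a row-stochastic influence matrix $W$ with node set $V=\{1,\dots,n\}$. For every initial condition $x(0)\in\mathbb R^n$, the solution $x(t)$ almost surely reaches an equilibrium $x^*$ in finite time.
   Context: A matrix $W=(w_{ij})_{n\times n}$ is row-stochastic if $w_{ij}\ge 0$ for all $i,j$ and $\sum_{j=1}^n w_{ij}=1$ for every $i$. A weighted median of $x\in\mathbb R^n$ with respect to row $i$ of $W$ is any $y\in\{x_1,\dots,x_n\}$ satisfying $\sum_{j:\,x_j<y}w_{ij}\le 1/2$ and $\sum_{j:\,x_j>y}w_{ij}\le 1/2$. $\mathrm{Med}_i(x;W)$ denotes this weighted median when it is unique. When it is not unique, $\mathrm{Med}_i(x;W)$ denotes the weighted median closest to $x_i$, which is then uniquely determined. Weighted-median opinion dynamics: given $x(0)\in\mathbb R^n$, at each time step $t+1$ ($t=0,1,2,\dots$) an index $i$ is drawn uniformly at random from $\{1,\dots,n\}$, independently of the past. Then $x_i(t+1)=\mathrm{Med}_i(x(t);W)$ and $x_j(t+1)=x_j(t)$ for $j\ne i$. An equilibrium is a vector $x^*$ with $x^*_i=\mathrm{Med}_i(x^*;W)$ for all $i$. *)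

theory Defs
  imports "HOL-Probability.Probability"
begin

text \<open>Node set V is modelled by a finite type 'n (so n = CARD('n) \<ge> 1).
  The influence matrix is W :: real^'n^'n with entries W $ i $ j.\<close>

definition row_stochastic :: "real ^ 'n ^ 'n \<Rightarrow> bool" where
  "row_stochastic W \<longleftrightarrow>
     (\<forall>i j. W $ i $ j \<ge> 0) \<and> (\<forall>i. (\<Sum>j\<in>UNIV. W $ i $ j) = 1)"

definition is_wmedian :: "real ^ 'n ^ 'n \<Rightarrow> real ^ 'n \<Rightarrow> 'n \<Rightarrow> real \<Rightarrow> bool" where
  "is_wmedian W x i y \<longleftrightarrow>
     (\<exists>k. y = x $ k) \<and>
     (\<Sum>j\<in>{j. x $ j < y}. W $ i $ j) \<le> 1/2 \<and>
     (\<Sum>j\<in>{j. x $ j > y}. W $ i $ j) \<le> 1/2"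

definition Med :: "real ^ 'n ^ 'n \<Rightarrow> real ^ 'n \<Rightarrow> 'n \<Rightarrow> real" where
  "Med W x i =
     (if \<exists>!y. is_wmedian W x i y then THE y. is_wmedian W x i y
      else THE y. is_wmedian W x i y \<and>
                  (\<forall>z. is_wmedian W x i z \<longrightarrow> \<bar>y - x $ i\<bar> \<le> \<bar>z - x $ i\<bar>))"

definition is_equilibrium :: "real ^ 'n ^ 'n \<Rightarrow> real ^ 'n \<Rightarrow> bool" where
  "is_equilibrium W x \<longleftrightarrow> (\<forall>i. x $ i = Med W x i)"

text \<open>Trajectory driven by a stream of selected nodes: \<omega> !! t is the index drawn at
  time step t+1.\<close>
primrec wm_traj :: "real ^ 'n ^ 'n \<Rightarrow> real ^ 'n \<Rightarrow> 'n stream \<Rightarrow> nat \<Rightarrow> real ^ 'n" where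
  "wm_traj W x0 \<omega> 0 = x0"
| "wm_traj W x0 \<omega> (Suc t) =
     (let x = wm_traj W x0 \<omega> t; i = \<omega> !! t
      in (\<chi> j. if j = i then Med W x i else x $ j))"

definition node_selection :: "'n::finite stream measure" where
  "node_selection = stream_space (measure_pmf (pmf_of_set UNIV))"

end

theory Submission
  imports Defs
begin

text \<open>The weighted medians of \<open>x\<close> for row \<open>i\<close> form the values of \<open>x\<close> in an interval whose
  endpoints depend monotonically on \<open>x\<close>, and \<open>Med\<close> clamps \<open>x\<^sub>i\<close> to that interval; hence \<open>Med\<close> is
  monotone. All states stay in the finite set of vectors with entries among the initial values.
  From any such state an equilibrium is reached by a finite sequence of updates: first update
  nodes lying below their median, which only raises entries and so terminates; then update nodes
  lying above their median, which only lowers entries, while monotonicity of \<open>Med\<close> keeps every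
  node at or above its median. Concatenating, one finite word drives every state to an
  equilibrium. An i.i.d. uniform stream of nodes contains this word almost surely, and
  equilibria are absorbing.\<close>

definition weight_below :: "real^'n^'n \<Rightarrow> real^'n \<Rightarrow> 'n \<Rightarrow> real \<Rightarrow> real" where
  "weight_below W x i y = (\<Sum>j\<in>{j. x$j < y}. W$i$j)"

definition weight_above :: "real^'n^'n \<Rightarrow> real^'n \<Rightarrow> 'n \<Rightarrow> real \<Rightarrow> real" where
  "weight_above W x i y = (\<Sum>j\<in>{j. x$j > y}. W$i$j)"

lemma is_wmedian_iff:
  "is_wmedian W x i y \<longleftrightarrow>
     y \<in> range (($) x) \<and> weight_below W x i y \<le> 1/2 \<and> weight_above W x i y \<le> 1/2"
  unfolding is_wmedian_def weight_below_def weight_above_def by auto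

lemma is_wmedian_uminus: "is_wmedian W (- x) i (- y) \<longleftrightarrow> is_wmedian W x i y"
  unfolding is_wmedian_def by (auto simp: minus_equation_iff[of y])

lemma row_sum_mono:
  assumes "row_stochastic W" and "A \<subseteq> B"
  shows "(\<Sum>j\<in>A. W$i$j) \<le> (\<Sum>j\<in>B. W$i$j)"
  using assms by (intro sum_mono2) (auto simp: row_stochastic_def)

lemma row_sum_Compl:
  assumes "row_stochastic W"
  shows "(\<Sum>j\<in>{j. P j}. W$i$j) = 1 - (\<Sum>j\<in>{j. \<not> P j}. W$i$j)"
proof -
  have "(\<Sum>j\<in>UNIV. W$i$j) = (\<Sum>j\<in>{j. P j}. W$i$j) + (\<Sum>j\<in>{j. \<not> P j}. W$i$j)"
    by (subst sum.Int_Diff[where B = "{j. P j}"]) (auto intro!: sum.cong arg_cong2[where f = "(+)"])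
  with assms show ?thesis by (simp add: row_stochastic_def)
qed

lemma wmedian_le:
  assumes W: "row_stochastic W" and above: "weight_above W x i (x$k) \<le> 1/2"
  shows "\<exists>m. is_wmedian W x i m \<and> m \<le> x$k"
proof -
  define S where "S = {y \<in> range (($) x). weight_above W x i y \<le> 1/2 \<and> y \<le> x$k}"
  have "finite S" "x$k \<in> S"
    using above by (auto simp: S_def)
  define a where "a = Min S"
  have aS: "a \<in> S" and a_min: "\<And>y. y \<in> S \<Longrightarrow> a \<le> y"
    using \<open>finite S\<close> \<open>x$k \<in> S\<close> unfolding a_def by (auto intro: Min_in)
  have "weight_below W x i a \<le> 1/2"
  proof (rule ccontr)
    assume below: "\<not> weight_below W x i a \<le> 1/2"
    then have "{j. x$j < a} \<noteq> {}"
      by (force simp: weight_below_def)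
    define a' where "a' = Max (($) x ` {j. x$j < a})"
    have "a' \<in> ($) x ` {j. x$j < a}"
      using \<open>{j. x$j < a} \<noteq> {}\<close> by (auto simp: a'_def)
    then have "a' < a" "a' \<in> range (($) x)"
      by auto
    have "x$j \<le> a'" if "x$j < a" for j
      using that by (simp add: a'_def)
    then have "{j. a' < x$j} = {j. \<not> x$j < a}"
      using \<open>a' < a\<close> by force
    then have "weight_above W x i a' = 1 - weight_below W x i a"
      using row_sum_Compl[OF W, where P = "\<lambda>j. x$j < a" and i = i] by (simp add: weight_above_def weight_below_def)
    with below have "a' \<in> S"
      using aS \<open>a' < a\<close> \<open>a' \<in> range (($) x)\<close> by (auto simp: S_def)
    with a_min \<open>a' < a\<close> show False
      by force
  qed
  with aS show ?thesis
    by (auto simp: S_def is_wmedian_iff)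
qed

lemma wmedian_exists:
  assumes "row_stochastic W"
  shows "\<exists>m. is_wmedian W x i m"
proof -
  have "Max (range (($) x)) \<in> range (($) x)"
    by (rule Max_in) auto
  then obtain k where k: "x$k = Max (range (($) x))"
    by (metis rangeE)
  then have "weight_above W x i (x$k) = 0"
    by (auto simp: weight_above_def not_less intro!: sum.neutral)
  then show ?thesis
    using wmedian_le[OF assms, of x i k] by auto
qed

definition wmedians :: "real^'n^'n \<Rightarrow> real^'n \<Rightarrow> 'n \<Rightarrow> real set" where
  "wmedians W x i = {y. is_wmedian W x i y}"

definition wmedian_min :: "real^'n^'n \<Rightarrow> real^'n \<Rightarrow> 'n \<Rightarrow> real" where
  "wmedian_min W x i = Min (wmedians W x i)"

definition wmedian_max :: "real^'n^'n \<Rightarrow> real^'n \<Rightarrow> 'n \<Rightarrow> real" where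
  "wmedian_max W x i = Max (wmedians W x i)"

lemma wmedians_subset_range: "wmedians W x i \<subseteq> range (($) x)"
  by (auto simp: wmedians_def is_wmedian_def)

lemma finite_wmedians: "finite (wmedians W x i)"
  using wmedians_subset_range by (rule finite_subset) simp

lemma wmedians_nonempty: "row_stochastic W \<Longrightarrow> wmedians W x i \<noteq> {}"
  using wmedian_exists by (auto simp: wmedians_def)

lemma wmedian_min_in: "row_stochastic W \<Longrightarrow> wmedian_min W x i \<in> wmedians W x i"
  unfolding wmedian_min_def using finite_wmedians wmedians_nonempty by (rule Min_in)

lemma wmedian_max_in: "row_stochastic W \<Longrightarrow> wmedian_max W x i \<in> wmedians W x i"
  unfolding wmedian_max_def using finite_wmedians wmedians_nonempty by (rule Max_in)

lemma wmedian_min_le: "y \<in> wmedians W x i \<Longrightarrow> wmedian_min W x i \<le> y"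
  unfolding wmedian_min_def using finite_wmedians by (rule Min_le)

lemma wmedian_max_ge: "y \<in> wmedians W x i \<Longrightarrow> y \<le> wmedian_max W x i"
  unfolding wmedian_max_def using finite_wmedians by (rule Max_ge)

lemma uminus_in_wmedians_iff: "- y \<in> wmedians W (- x) i \<longleftrightarrow> y \<in> wmedians W x i"
  by (simp add: wmedians_def is_wmedian_uminus)

lemma wmedian_max_eq_uminus_min:
  assumes "row_stochastic W"
  shows "wmedian_max W x i = - wmedian_min W (- x) i"
proof (rule antisym)
  have "- wmedian_min W (- x) i \<in> wmedians W x i"
    using wmedian_min_in[OF assms, of "- x" i] uminus_in_wmedians_iff[of "- wmedian_min W (- x) i" W x i]
    by simp
  then show "- wmedian_min W (- x) i \<le> wmedian_max W x i"
    by (rule wmedian_max_ge)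
  have "- wmedian_max W x i \<in> wmedians W (- x) i"
    using wmedian_max_in[OF assms] uminus_in_wmedians_iff by blast
  then show "wmedian_max W x i \<le> - wmedian_min W (- x) i"
    using wmedian_min_le by fastforce
qed

lemma wmedians_interval:
  assumes W: "row_stochastic W" and y: "y \<in> range (($) x)"
    and "wmedian_min W x i \<le> y" "y \<le> wmedian_max W x i"
  shows "y \<in> wmedians W x i"
proof -
  let ?a = "wmedian_min W x i" and ?b = "wmedian_max W x i"
  have "weight_above W x i y \<le> weight_above W x i ?a"
    unfolding weight_above_def using assms by (intro row_sum_mono) auto
  moreover have "weight_above W x i ?a \<le> 1/2"
    using wmedian_min_in[OF W] by (simp add: wmedians_def is_wmedian_iff)
  moreover have "weight_below W x i y \<le> weight_below W x i ?b"
    unfolding weight_below_def using assms by (intro row_sum_mono) auto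
  moreover have "weight_below W x i ?b \<le> 1/2"
    using wmedian_max_in[OF W] by (simp add: wmedians_def is_wmedian_iff)
  ultimately show ?thesis
    using y by (simp add: wmedians_def is_wmedian_iff)
qed

lemma clamp_nearest:
  fixes a b t z :: real
  assumes "a \<le> z" "z \<le> b"
  shows "\<bar>max a (min b t) - t\<bar> \<le> \<bar>z - t\<bar>"
    and "\<bar>z - t\<bar> \<le> \<bar>max a (min b t) - t\<bar> \<Longrightarrow> z = max a (min b t)"
  using assms by (auto simp: abs_if max_def min_def split: if_splits)

lemma clamp_in_wmedians:
  assumes W: "row_stochastic W"
  shows "max (wmedian_min W x i) (min (wmedian_max W x i) (x$i)) \<in> wmedians W x i"
  using wmedian_min_in[OF W] wmedian_max_in[OF W] wmedians_interval[OF W, of "x$i" x i]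
  by (auto simp: max_def min_def)

lemma Med_eq_clamp:
  assumes W: "row_stochastic W"
  shows "Med W x i = max (wmedian_min W x i) (min (wmedian_max W x i) (x$i))"
proof -
  define c where "c = max (wmedian_min W x i) (min (wmedian_max W x i) (x$i))"
  have c: "is_wmedian W x i c"
    using clamp_in_wmedians[OF W] by (simp add: c_def wmedians_def)
  have bounds: "wmedian_min W x i \<le> z" "z \<le> wmedian_max W x i" if "is_wmedian W x i z" for z
    using that wmedian_min_le wmedian_max_ge by (auto simp: wmedians_def)
  have nearest: "is_wmedian W x i z \<and> (\<forall>z'. is_wmedian W x i z' \<longrightarrow> \<bar>z - x$i\<bar> \<le> \<bar>z' - x$i\<bar>)
      \<longleftrightarrow> z = c" for z
    using c clamp_nearest[OF bounds] unfolding c_def by (metis order.refl)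
  show ?thesis
  proof (cases "\<exists>!y. is_wmedian W x i y")
    case True
    then show ?thesis
      using c by (auto simp: Med_def c_def intro: the1_equality)
  next
    case False
    then show ?thesis
      by (simp add: Med_def nearest c_def)
  qed
qed

lemma Med_is_wmedian: "row_stochastic W \<Longrightarrow> is_wmedian W x i (Med W x i)"
  using clamp_in_wmedians by (simp add: Med_eq_clamp wmedians_def)

lemma Med_in_range: "row_stochastic W \<Longrightarrow> Med W x i \<in> range (($) x)"
  using Med_is_wmedian[of W x i] by (auto simp: is_wmedian_def)

lemma Med_eq_self: "row_stochastic W \<Longrightarrow> is_wmedian W x i (x$i) \<Longrightarrow> Med W x i = x$i"
  using wmedian_min_le[of "x$i" W x i] wmedian_max_ge[of "x$i" W x i]
  by (simp add: Med_eq_clamp wmedians_def)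

lemma wmedian_min_mono:
  assumes W: "row_stochastic W" and le: "\<And>j. x$j \<le> x'$j"
  shows "wmedian_min W x i \<le> wmedian_min W x' i"
proof -
  obtain k where k: "wmedian_min W x' i = x'$k"
    using wmedian_min_in[OF W] wmedians_subset_range by blast
  have "weight_above W x' i (x'$k) \<le> 1/2"
    using wmedian_min_in[OF W, of x' i] by (simp add: k wmedians_def is_wmedian_iff)
  define C where "C = {y \<in> range (($) x). y \<le> x'$k}"
  have "finite C" "x$k \<in> C"
    using le[of k] by (auto simp: C_def)
  define c where "c = Max C"
  have "c \<in> C" and c_max: "\<And>y. y \<in> C \<Longrightarrow> y \<le> c"
    using \<open>finite C\<close> \<open>x$k \<in> C\<close> unfolding c_def by (auto intro: Max_in)
  then obtain m where m: "c = x$m" "c \<le> x'$k"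
    by (auto simp: C_def)
  have "{j. c < x$j} \<subseteq> {j. x'$k < x'$j}"
  proof safe
    fix j assume "c < x$j"
    then have "x'$k < x$j"
      using c_max[of "x$j"] by (force simp: C_def)
    then show "x'$k < x'$j"
      using le[of j] by simp
  qed
  then have "weight_above W x i (x$m) \<le> weight_above W x' i (x'$k)"
    unfolding weight_above_def m(1)[symmetric] by (rule row_sum_mono[OF W])
  then obtain m0 where "is_wmedian W x i m0" "m0 \<le> x$m"
    using wmedian_le[OF W, of x i m] \<open>weight_above W x' i (x'$k) \<le> 1/2\<close> by auto
  then show ?thesis
    using wmedian_min_le[of m0] m k by (force simp: wmedians_def)
qed

lemma wmedian_max_mono:
  assumes W: "row_stochastic W" and le: "\<And>j. x$j \<le> x'$j"
  shows "wmedian_max W x i \<le> wmedian_max W x' i"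
  using wmedian_min_mono[OF W, of "- x'" "- x" i] le by (simp add: wmedian_max_eq_uminus_min[OF W])

lemma Med_mono:
  assumes W: "row_stochastic W" and le: "\<And>j. x$j \<le> x'$j"
  shows "Med W x i \<le> Med W x' i"
  unfolding Med_eq_clamp[OF W]
  using wmedian_min_mono[OF W le] wmedian_max_mono[OF W le] le[of i]
  by (intro max.mono min.mono)

definition wm_update :: "real^'n^'n \<Rightarrow> real^'n \<Rightarrow> 'n \<Rightarrow> real^'n" where
  "wm_update W x i = (\<chi> j. if j = i then Med W x i else x$j)"

fun wm_run :: "real^'n^'n \<Rightarrow> real^'n \<Rightarrow> 'n list \<Rightarrow> real^'n" where
  "wm_run W x [] = x"
| "wm_run W x (i # is) = wm_run W (wm_update W x i) is"

lemma wm_run_append: "wm_run W x (us @ vs) = wm_run W (wm_run W x us) vs"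
  by (induction us arbitrary: x) auto

lemma wm_run_equilibrium: "is_equilibrium W x \<Longrightarrow> wm_run W x w = x"
proof (induction w)
  case (Cons i w)
  then have "wm_update W x i = x"
    by (simp add: is_equilibrium_def wm_update_def vec_eq_iff)
  with Cons show ?case
    by simp
qed simp

lemma range_wm_update_subset:
  "row_stochastic W \<Longrightarrow> range (($) x) \<subseteq> V \<Longrightarrow> range (($) (wm_update W x i)) \<subseteq> V"
  using Med_in_range[of W x i] by (auto simp: wm_update_def)

lemma range_wm_run_subset:
  "row_stochastic W \<Longrightarrow> range (($) x) \<subseteq> V \<Longrightarrow> range (($) (wm_run W x w)) \<subseteq> V"
  by (induction w arbitrary: x) (auto simp: range_wm_update_subset)

lemma Med_wm_update_same:
  assumes W: "row_stochastic W"
  shows "Med W (wm_update W x i) i = Med W x i"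
proof -
  define m where "m = Med W x i"
  define x' where "x' = wm_update W x i"
  have m: "is_wmedian W x i m"
    using Med_is_wmedian[OF W] by (simp add: m_def)
  have "x'$i = m"
    by (simp add: x'_def wm_update_def m_def)
  have "weight_below W x' i m \<le> weight_below W x i m" "weight_above W x' i m \<le> weight_above W x i m"
    unfolding weight_below_def weight_above_def
    by (auto intro!: row_sum_mono[OF W] simp: x'_def wm_update_def m_def)
  with m \<open>x'$i = m\<close> have "is_wmedian W x' i (x'$i)"
    by (auto simp: is_wmedian_iff)
  then show ?thesis
    using Med_eq_self[OF W] \<open>x'$i = m\<close> by (simp add: x'_def m_def)
qed

lemma Med_le_wm_update:
  assumes W: "row_stochastic W" and le: "\<And>j. Med W x j \<le> x$j"
  shows "Med W (wm_update W x i) j \<le> wm_update W x i $ j"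
proof (cases "j = i")
  case True
  then show ?thesis
    using Med_wm_update_same[OF W, of x i] by (simp add: wm_update_def)
next
  case False
  have "\<And>k. wm_update W x i $ k \<le> x$k"
    using le[of i] by (simp add: wm_update_def)
  then have "Med W (wm_update W x i) j \<le> Med W x j"
    by (rule Med_mono[OF W])
  with le[of j] False show ?thesis
    by (simp add: wm_update_def)
qed

definition levels_above :: "real set \<Rightarrow> real^'n \<Rightarrow> nat" where
  "levels_above V x = (\<Sum>j\<in>UNIV. card {v\<in>V. x$j < v})"

lemma levels_above_decrease:
  assumes "finite V" "\<And>j. x$j \<le> y$j" "x$i < y$i" "y$i \<in> V"
  shows "levels_above V y < levels_above V x"
  unfolding levels_above_def
proof (rule sum_strict_mono_ex1)
  show "\<forall>j\<in>UNIV. card {v\<in>V. y$j < v} \<le> card {v\<in>V. x$j < v}"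
    using assms by (auto intro!: card_mono dest: order.strict_trans1[rotated])
  have "{v\<in>V. y$i < v} \<subset> {v\<in>V. x$i < v}"
    using assms by auto
  then show "\<exists>j\<in>UNIV. card {v\<in>V. y$j < v} < card {v\<in>V. x$j < v}"
    using assms by (auto intro!: psubset_card_mono)
qed simp

lemma reach_Med_le:
  assumes W: "row_stochastic W" and V: "finite V"
  shows "range (($) x) \<subseteq> V \<Longrightarrow> \<exists>w. \<forall>j. Med W (wm_run W x w) j \<le> wm_run W x w $ j"
proof (induction "levels_above V x" arbitrary: x rule: less_induct)
  case less
  show ?case
  proof (cases "\<forall>j. Med W x j \<le> x$j")
    case True
    then show ?thesis
      by (intro exI[of _ "[]"]) simp
  next
    case False
    then obtain i where i: "x$i < Med W x i"
      by (auto simp: not_le)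
    define x' where "x' = wm_update W x i"
    have x'V: "range (($) x') \<subseteq> V"
      using range_wm_update_subset[OF W less.prems] by (simp add: x'_def)
    have "levels_above V x' < levels_above V x"
      using i x'V by (intro levels_above_decrease[OF V, of x x' i]) (auto simp: x'_def wm_update_def)
    then obtain w where "\<forall>j. Med W (wm_run W x' w) j \<le> wm_run W x' w $ j"
      using less.hyps x'V by blast
    then show ?thesis
      by (intro exI[of _ "i # w"]) (simp add: x'_def)
  qed
qed

text \<open>\<open>levels_above (uminus ` V) (- x)\<close> counts, per node, the levels of \<open>V\<close> below its entry.\<close>

lemma reach_equilibrium_from_Med_le:
  assumes W: "row_stochastic W" and V: "finite V"
  shows "range (($) x) \<subseteq> V \<Longrightarrow> (\<And>j. Med W x j \<le> x$j) \<Longrightarrow> \<exists>w. is_equilibrium W (wm_run W x w)"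
proof (induction "levels_above (uminus ` V) (- x)" arbitrary: x rule: less_induct)
  case less
  show ?case
  proof (cases "\<forall>j. Med W x j = x$j")
    case True
    then show ?thesis
      by (intro exI[of _ "[]"]) (simp add: is_equilibrium_def)
  next
    case False
    then obtain i where i: "Med W x i < x$i"
      using less.prems(2) order.not_eq_order_implies_strict by blast
    define x' where "x' = wm_update W x i"
    have x'V: "range (($) x') \<subseteq> V"
      using range_wm_update_subset[OF W less.prems(1)] by (simp add: x'_def)
    have "levels_above (uminus ` V) (- x') < levels_above (uminus ` V) (- x)"
      using i x'V V
      by (intro levels_above_decrease[of _ "- x" "- x'" i]) (auto simp: x'_def wm_update_def)
    moreover have "\<And>j. Med W x' j \<le> x'$j"
      unfolding x'_def using W less.prems(2) by (rule Med_le_wm_update)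
    ultimately obtain w where "is_equilibrium W (wm_run W x' w)"
      using less.hyps x'V by blast
    then show ?thesis
      by (intro exI[of _ "i # w"]) (simp add: x'_def)
  qed
qed

lemma reach_equilibrium:
  assumes W: "row_stochastic W" and V: "finite V" and x: "range (($) x) \<subseteq> V"
  shows "\<exists>w. is_equilibrium W (wm_run W x w)"
proof -
  obtain w1 where "\<forall>j. Med W (wm_run W x w1) j \<le> wm_run W x w1 $ j"
    using reach_Med_le[OF W V x] by blast
  then obtain w2 where "is_equilibrium W (wm_run W (wm_run W x w1) w2)"
    using reach_equilibrium_from_Med_le[OF W V range_wm_run_subset[OF W x]] by blast
  then show ?thesis
    by (auto simp: wm_run_append[symmetric])
qed

lemma synchronizing_word:
  assumes W: "row_stochastic W" and V: "finite V"
  shows "finite S \<Longrightarrow> (\<And>x. x \<in> S \<Longrightarrow> range (($) x) \<subseteq> V)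
    \<Longrightarrow> \<exists>w. \<forall>x\<in>S. is_equilibrium W (wm_run W x w)"
proof (induction S rule: finite_induct)
  case (insert x S)
  then obtain w where w: "\<forall>y\<in>S. is_equilibrium W (wm_run W y w)"
    by auto
  have "range (($) (wm_run W x w)) \<subseteq> V"
    using insert.prems by (intro range_wm_run_subset[OF W]) auto
  then obtain w' where "is_equilibrium W (wm_run W (wm_run W x w) w')"
    using reach_equilibrium[OF W V] by blast
  with w show ?case
    by (intro exI[of _ "w @ w'"]) (auto simp: wm_run_append wm_run_equilibrium)
qed simp

lemma finite_vecs_with_values:
  assumes "finite V"
  shows "finite {x :: real^'n. range (($) x) \<subseteq> V}"
proof -
  have "{x :: real^'n. range (($) x) \<subseteq> V} = vec_nth -` (UNIV \<rightarrow>\<^sub>E V)"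
    by (auto simp: PiE_def)
  moreover have "inj (vec_nth :: real^'n \<Rightarrow> 'n \<Rightarrow> real)"
    by (auto intro: injI simp: vec_eq_iff)
  ultimately show ?thesis
    using assms by (simp add: finite_vimageI finite_PiE)
qed

lemma wm_traj_Suc: "wm_traj W x0 \<omega> (Suc t) = wm_update W (wm_traj W x0 \<omega> t) (\<omega> !! t)"
  by (simp add: wm_update_def Let_def)

lemma wm_traj_add: "wm_traj W x0 \<omega> (t + k) = wm_run W (wm_traj W x0 \<omega> t) (stake k (sdrop t \<omega>))"
proof (induction k)
  case (Suc k)
  have "wm_traj W x0 \<omega> (t + Suc k) = wm_update W (wm_traj W x0 \<omega> (t + k)) (\<omega> !! (t + k))"
    by (simp add: wm_traj_Suc[symmetric])
  also have "\<dots> = wm_run W (wm_traj W x0 \<omega> t) (stake k (sdrop t \<omega>) @ [sdrop t \<omega> !! k])"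
    using Suc by (simp add: wm_run_append sdrop_snth add.commute)
  also have "\<dots> = wm_run W (wm_traj W x0 \<omega> t) (stake (Suc k) (sdrop t \<omega>))"
    by (simp only: stake_Suc)
  finally show ?case .
qed simp

lemma range_wm_traj_subset:
  assumes "row_stochastic W"
  shows "range (($) (wm_traj W x0 \<omega> t)) \<subseteq> range (($) x0)"
  by (induction t) (simp_all del: wm_traj.simps(2) add: wm_traj_Suc range_wm_update_subset[OF assms])

lemma nn_integral_stream_space_sdrop:
  assumes "prob_space M" and [measurable]: "g \<in> borel_measurable (stream_space M)"
  shows "(\<integral>\<^sup>+\<omega>. g (sdrop n \<omega>) \<partial>stream_space M) = (\<integral>\<^sup>+\<omega>. g \<omega> \<partial>stream_space M)"
proof (induction n)
  case (Suc n)
  have "(\<integral>\<^sup>+\<omega>. g (sdrop (Suc n) \<omega>) \<partial>stream_space M)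
      = (\<integral>\<^sup>+a. (\<integral>\<^sup>+\<omega>. g (sdrop n \<omega>) \<partial>stream_space M) \<partial>M)"
    by (subst prob_space.nn_integral_stream_space[OF assms(1)]) simp_all
  also have "\<dots> = (\<integral>\<^sup>+\<omega>. g \<omega> \<partial>stream_space M)"
    using Suc by (simp add: prob_space.emeasure_space_1[OF assms(1)])
  finally show ?case .
qed simp

lemma nn_integral_stream_space_stake:
  fixes p :: "'a::countable pmf"
  assumes [measurable]: "g \<in> borel_measurable (stream_space (measure_pmf p))"
  shows "(\<integral>\<^sup>+\<omega>. indicator {\<omega>. stake (length u) \<omega> = u} \<omega> * g (sdrop (length u) \<omega>) \<partial>stream_space (measure_pmf p))
    = (\<Prod>a\<leftarrow>u. ennreal (pmf p a)) * (\<integral>\<^sup>+\<omega>. g \<omega> \<partial>stream_space (measure_pmf p))"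
proof (induction u)
  case (Cons a u)
  let ?G = "\<lambda>\<omega>. indicator {\<omega>. stake (length u) \<omega> = u} \<omega> * g (sdrop (length u) \<omega>)"
  have "(\<integral>\<^sup>+\<omega>. indicator {\<omega>. stake (length (a # u)) \<omega> = a # u} \<omega> * g (sdrop (length (a # u)) \<omega>) \<partial>stream_space (measure_pmf p))
      = (\<integral>\<^sup>+b. indicator {a} b * (\<integral>\<^sup>+\<omega>. ?G \<omega> \<partial>stream_space (measure_pmf p)) \<partial>measure_pmf p)"
    by (subst prob_space.nn_integral_stream_space[OF prob_space_measure_pmf], measurable)
       (auto intro!: nn_integral_cong simp: indicator_def)
  also have "\<dots> = ennreal (pmf p a) * (\<integral>\<^sup>+\<omega>. ?G \<omega> \<partial>stream_space (measure_pmf p))"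
    by (simp add: nn_integral_multc emeasure_pmf_single)
  finally show ?case
    using Cons by (simp add: mult.assoc)
qed simp

lemma AE_stream_space_ev_stake:
  fixes p :: "'a::countable pmf"
  assumes u: "set u \<subseteq> set_pmf p"
  shows "AE \<omega> in stream_space (measure_pmf p). ev (\<lambda>s. stake (length u) s = u) \<omega>"
proof -
  define L where "L = length u"
  let ?S = "stream_space (measure_pmf p)"
  define B where "B = {\<omega> \<in> space ?S. \<not> ev (\<lambda>s. stake L s = u) \<omega>}"
  have [measurable]: "B \<in> sets ?S"
    unfolding B_def by measurable
  interpret S: prob_space ?S
    by (rule prob_space.prob_space_stream_space[OF prob_space_measure_pmf])
  define c where "c = (\<Prod>a\<leftarrow>u. ennreal (pmf p a))"
  have "c \<noteq> 0"
    using u by (auto simp: c_def prod_list_zero_iff set_pmf_iff)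
  have B_sdrop: "indicator B \<omega> + indicator {\<omega>. stake L \<omega> = u} \<omega> * indicator B (sdrop L \<omega>)
      \<le> (indicator B (sdrop L \<omega>) :: ennreal)" for \<omega>
  proof (cases "\<omega> \<in> B")
    case True
    then have "\<not> ev (\<lambda>s. stake L s = u) \<omega>"
      by (simp add: B_def)
    moreover have "ev (\<lambda>s. stake L s = u) \<omega>" if "ev (\<lambda>s. stake L s = u) (sdrop L \<omega>)"
      using ev_shift[OF that, of "stake L \<omega>"] by (simp only: stake_sdrop)
    ultimately have "stake L \<omega> \<noteq> u" "sdrop L \<omega> \<in> B"
      by (auto simp: B_def space_stream_space)
    with True show ?thesis
      by simp
  qed (simp add: indicator_def)
  txt \<open>Streams avoiding \<open>u\<close> still avoid it after dropping \<open>L\<close> symbols, and cannot start with \<open>u\<close>;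
    by shift invariance and independence of the first \<open>L\<close> symbols, \<open>P(B) + c P(B) \<le> P(B)\<close>.\<close>
  have "(\<integral>\<^sup>+\<omega>. indicator {\<omega>. stake L \<omega> = u} \<omega> * indicator B (sdrop L \<omega>) \<partial>?S) = c * emeasure ?S B"
    unfolding c_def L_def
    by (subst nn_integral_stream_space_stake) simp_all
  moreover have "(\<integral>\<^sup>+\<omega>. indicator B \<omega> + indicator {\<omega>. stake L \<omega> = u} \<omega> * indicator B (sdrop L \<omega>) \<partial>?S)
      = (\<integral>\<^sup>+\<omega>. indicator B \<omega> \<partial>?S) + (\<integral>\<^sup>+\<omega>. indicator {\<omega>. stake L \<omega> = u} \<omega> * indicator B (sdrop L \<omega>) \<partial>?S)"
    by (rule nn_integral_add) measurable
  ultimately have "emeasure ?S B + c * emeasure ?S B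
      = (\<integral>\<^sup>+\<omega>. indicator B \<omega> + indicator {\<omega>. stake L \<omega> = u} \<omega> * indicator B (sdrop L \<omega>) \<partial>?S)"
    by simp
  also have "\<dots> \<le> (\<integral>\<^sup>+\<omega>. indicator B (sdrop L \<omega>) \<partial>?S)"
    by (intro nn_integral_mono B_sdrop)
  also have "\<dots> = emeasure ?S B + 0"
    using nn_integral_stream_space_sdrop[OF prob_space_measure_pmf[of p], where g = "indicator B" and n = L]
    by simp
  finally have "c * emeasure ?S B = 0"
    using S.emeasure_finite by (simp add: ennreal_add_left_cancel_le)
  with \<open>c \<noteq> 0\<close> have "emeasure ?S B = 0"
    by simp
  then show ?thesis
    by (intro AE_I[of _ _ B]) (auto simp: B_def L_def)
qed

theorem mainTheorem7:
  fixes W :: "real ^ 'n ^ 'n" and x0 :: "real ^ 'n"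
  assumes "row_stochastic W"
  shows "AE \<omega> in node_selection.
           \<exists>T xstar. is_equilibrium W xstar \<and> (\<forall>t\<ge>T. wm_traj W x0 \<omega> t = xstar)"
proof -
  let ?V = "range (($) x0)"
  have "finite ?V"
    by simp
  then have states: "finite {x :: real^'n. range (($) x) \<subseteq> ?V}"
    by (rule finite_vecs_with_values)
  obtain w where w: "\<forall>x\<in>{x. range (($) x) \<subseteq> ?V}. is_equilibrium W (wm_run W x w)"
    using synchronizing_word[OF assms \<open>finite ?V\<close> states] by auto
  have "AE \<omega> in node_selection. ev (\<lambda>s. stake (length w) s = w) \<omega>"
    unfolding node_selection_def by (rule AE_stream_space_ev_stake) simp
  then show ?thesis
  proof (rule AE_mp, intro AE_I2 impI)
    fix \<omega> :: "'n stream"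
    assume "ev (\<lambda>s. stake (length w) s = w) \<omega>"
    then obtain t where t: "stake (length w) (sdrop t \<omega>) = w"
      by (auto simp: ev_iff_sdrop)
    define xstar where "xstar = wm_run W (wm_traj W x0 \<omega> t) w"
    have eq: "is_equilibrium W xstar"
      using w range_wm_traj_subset[OF assms] by (simp add: xstar_def)
    have "wm_traj W x0 \<omega> (t + length w + k) = xstar" for k
      using wm_traj_add[of W x0 \<omega> "t + length w" k] wm_traj_add[of W x0 \<omega> t "length w"] t
      by (simp add: xstar_def[symmetric] wm_run_equilibrium[OF eq])
    with eq show "\<exists>T xstar. is_equilibrium W xstar \<and> (\<forall>t\<ge>T. wm_traj W x0 \<omega> t = xstar)"
      by (auto simp: le_iff_add)
  qed
qed

end
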